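(* Let $A\in\mathbb{R}^{n\times n}$, $B\in\mathbb{R}^{n\times m}$, let $N\geq n+m$, and for $i=1,\dots,N$ let $x_{i,1},x_{i,2}\in\mathbb{R}^{n}$, $u_{i,1}\in\mathbb{R}^{m}$ satisfy $x_{i,2}=Ax_{i,1}+Bu_{i,1}$. Put $X_{N,1}:=(x_{1,1},\dots,x_{N,1})^{\top}\in\mathbb{R}^{N\times n}$, $X_{N,2}:=(x_{1,2},\dots,x_{N,2})^{\top}\in\mathbb{R}^{N\times n}$, $U_{N,1}:=(u_{1,1},\dots,u_{N,1})^{\top}\in\mathbb{R}^{N\times m}$. Suppose $\operatorname{rank}\begin{pmatrix}X_{N,1} & U_{N,1}\end{pmatrix}=n+m$. Then the matrix equation $$X_{N,2}X_{N,1}^{\top}=X_{N,1}Z_{N,2}^{\top}+U_{N,1}Z_{B_{N,1}}$$ in the unknowns $(Z_{N,2},Z_{B_{N,1}})\in\mathbb{R}^{N\times n}\times\mathbb{R}^{m\times N}$ has a unique solution, namely $Z_{N,2}=X_{N,1}A$ and $Z_{B_{N,1}}=B^{\top}X_{N,1}^{\top}$. *)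

theory Defs
  imports "HOL-Analysis.Analysis"
begin

definition hconcat :: "'a^'n^'N \<Rightarrow> 'a^'m^'N \<Rightarrow> 'a^('n + 'm)^'N" where
  "hconcat X U = (\<chi> i k. case k of Inl j \<Rightarrow> X $ i $ j | Inr j \<Rightarrow> U $ i $ j)"

definition data_mat :: "('N \<Rightarrow> 'a^'n) \<Rightarrow> 'a^'n^'N" where
  "data_mat v = (\<chi> i j. v i $ j)"

end

theory Submission
  imports Defs
begin

text \<open>Stack the data into \<open>H = (X\<^sub>1 U\<^sub>1)\<close>. The dynamics give \<open>X\<^sub>2 = H (A B)\<^sup>T\<close>, so
  both sides of the matrix equation are left multiples of \<open>H\<close>: the left side is
  \<open>H (A\<^sup>T X\<^sub>1\<^sup>T ; B\<^sup>T X\<^sub>1\<^sup>T)\<close> and the right side is \<open>H (Z\<^sub>2\<^sup>T ; Z\<^sub>B)\<close>. Full column rank makes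
  \<open>H\<close> left invertible, hence left cancellable, and comparing the two blocks gives the
  unique solution.\<close>

definition vconcat :: "'a^'k^'n \<Rightarrow> 'a^'k^'m \<Rightarrow> 'a^'k^('n + 'm)" where
  "vconcat D E = (\<chi> j. case j of Inl a \<Rightarrow> D $ a | Inr b \<Rightarrow> E $ b)"

lemma vconcat_eq_iff: "vconcat D E = vconcat D' E' \<longleftrightarrow> D = D' \<and> E = E'"
proof
  assume "vconcat D E = vconcat D' E'"
  then have "vconcat D E $ Inl a = vconcat D' E' $ Inl a"
    and "vconcat D E $ Inr b = vconcat D' E' $ Inr b" for a b
    by simp_all
  then show "D = D' \<and> E = E'"
    by (simp add: vconcat_def vec_eq_iff)
qed simp

lemma vconcat_mult:
  "vconcat D E ** (C :: 'a::semiring_1^'p^'k) = vconcat (D ** C) (E ** C)"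
  by (simp add: vconcat_def matrix_matrix_mult_def vec_eq_iff split: sum.split)

lemma hconcat_mult_vconcat:
  fixes X :: "'a::semiring_1^'n^'N" and U :: "'a^'m^'N"
  shows "hconcat X U ** vconcat D E = X ** D + U ** E"
proof -
  have "sum g UNIV = sum (g \<circ> Inl) UNIV + sum (g \<circ> Inr) UNIV" for g :: "'n + 'm \<Rightarrow> 'a"
    by (metis UNIV_Plus_UNIV finite_class.finite_UNIV sum.Plus)
  then show ?thesis
    by (simp add: matrix_matrix_mult_def hconcat_def vconcat_def vec_eq_iff o_def)
qed

lemma data_mat_add: "data_mat (\<lambda>i. v i + w i) = data_mat v + data_mat w"
  by (simp add: data_mat_def vec_eq_iff)

lemma data_mat_matrix_vector_mult:
  "data_mat (\<lambda>i. (M :: 'a::comm_semiring_1^'n^'m) *v v i) = data_mat v ** transpose M"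
  by (simp add: data_mat_def matrix_matrix_mult_def matrix_vector_mult_def transpose_def
      vec_eq_iff mult.commute)

lemma full_rank_matrix_mult_left_cancel:
  fixes M :: "real^'k^'m"
  assumes "rank M = CARD('k)"
  shows "M ** S = M ** T \<longleftrightarrow> S = T"
proof
  obtain L where L: "L ** M = mat 1"
    using assms full_rank_injective matrix_left_invertible_injective by blast
  assume "M ** S = M ** T"
  then have "(L ** M) ** S = (L ** M) ** T"
    by (simp add: matrix_mul_assoc[symmetric])
  then show "S = T"
    by (simp add: L)
qed simp

theorem lemma2:
  fixes A :: "real^'n^'n" and B :: "real^'m^'n"
    and x1 x2 :: "'N::finite \<Rightarrow> real^'n" and u1 :: "'N \<Rightarrow> real^'m"
  assumes "CARD('N) \<ge> CARD('n) + CARD('m)"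
    and "\<And>i. x2 i = A *v x1 i + B *v u1 i"
    and "rank (hconcat (data_mat x1) (data_mat u1)) = CARD('n) + CARD('m)"
  shows "\<forall>(Z2 :: real^'n^'N) (ZB :: real^'N^'m).
            data_mat x2 ** transpose (data_mat x1)
              = data_mat x1 ** transpose Z2 + data_mat u1 ** ZB
            \<longleftrightarrow> Z2 = data_mat x1 ** A \<and> ZB = transpose B ** transpose (data_mat x1)"
proof (intro allI)
  fix Z2 :: "real^'n^'N" and ZB :: "real^'N^'m"
  define X where "X = data_mat x1"
  define H where "H = hconcat X (data_mat u1)"
  have "x2 = (\<lambda>i. A *v x1 i + B *v u1 i)"
    using assms(2) by blast
  then have "data_mat x2 = H ** vconcat (transpose A) (transpose B)"
    by (simp add: H_def X_def hconcat_mult_vconcat data_mat_add data_mat_matrix_vector_mult)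
  then have lhs: "data_mat x2 ** transpose X
      = H ** vconcat (transpose A ** transpose X) (transpose B ** transpose X)"
    by (simp add: matrix_mul_assoc[symmetric] vconcat_mult)
  have rhs: "X ** transpose Z2 + data_mat u1 ** ZB = H ** vconcat (transpose Z2) ZB"
    by (simp add: H_def hconcat_mult_vconcat)
  have "rank H = CARD('n + 'm)"
    using assms(3) by (simp add: H_def X_def)
  then have "data_mat x2 ** transpose X = X ** transpose Z2 + data_mat u1 ** ZB
      \<longleftrightarrow> transpose Z2 = transpose A ** transpose X \<and> ZB = transpose B ** transpose X"
    unfolding lhs rhs by (auto simp: full_rank_matrix_mult_left_cancel vconcat_eq_iff)
  also have "\<dots> \<longleftrightarrow> Z2 = X ** A \<and> ZB = transpose B ** transpose X"
    by (metis matrix_transpose_mul transpose_transpose)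
  finally show "data_mat x2 ** transpose (data_mat x1)
      = data_mat x1 ** transpose Z2 + data_mat u1 ** ZB
      \<longleftrightarrow> Z2 = data_mat x1 ** A \<and> ZB = transpose B ** transpose (data_mat x1)"
    unfolding X_def .
qed

end
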